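(* Let $N$ be an oriented Riemannian spin surface, $T$ a vector field, $f,H$ real functions, and $\varphi$ a spinor field of constant norm with $D\varphi=(H-f)\varphi-\frac12T\cdot\varphi$ such that $\varphi^+$ and $\varphi^-$ vanish nowhere. Then $W\equiv0$ on $N$, i.e. $\dfrac{A^+}{|\varphi^-|^2}=\dfrac{A^-}{|\varphi^+|^2}$.
   Context: Spinor conventions: $\Sigma N$ with Hermitian product $\langle\cdot,\cdot\rangle$, connection $\nabla$, Clifford multiplication with $X\cdot Y\cdot+Y\cdot X\cdot=-2\langle X,Y\rangle$, $\langle X\cdot\psi,\phi\rangle=-\langle\psi,X\cdot\phi\rangle$; $D=\sum_i e_i\cdot\nabla_{e_i}$; $\omega=e_1\cdot e_2$; $\Sigma^\pm N$ are the $\pm1$-eigenbundles of $i\omega$, $\varphi=\varphi^++\varphi^-$. $Q^\pm_\varphi(X,Y)=\mathrm{Re}\langle\nabla_X\varphi^\pm,Y\cdot\varphi^\mp\rangle$, $B^\pm(X,Y)=-\frac12\mathrm{Re}\langle X\cdot T\cdot\varphi^\pm,Y\cdot\varphi^\mp\rangle-\frac12\langle X,T\rangle\mathrm{Re}\langle\varphi^\pm,Y\cdot\varphi^\mp\rangle-\frac12 f\,\mathrm{Re}\langle X\cdot\varphi^\mp,Y\cdot\varphi^\mp\rangle$, $A^\pm=Q^\pm_\varphi+B^\pm$, $W=\frac{A^+}{|\varphi^-|^2}-\frac{A^-}{|\varphi^+|^2}$. *)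

theory Defs
  imports "HOL-Analysis.Analysis"
begin

(* Local model of an oriented Riemannian spin surface: an open set U of R^2
   equipped with a smooth oriented orthonormal frame (e1,e2) (which defines the
   metric); the spinor bundle is trivialised as U x C^2 with the standard
   complex 2-dimensional Clifford module.  Tangent vectors are written in frame
   coordinates (a,b) meaning a*e1 + b*e2. *)

type_synonym pt = "real \<times> real"
type_synonym spinor = "complex \<times> complex"

fun Ck_on :: "nat \<Rightarrow> ('a::euclidean_space \<Rightarrow> 'b::real_normed_vector) \<Rightarrow> 'a set \<Rightarrow> bool" where
  "Ck_on 0 g U = continuous_on U g"
| "Ck_on (Suc k) g U = (g differentiable_on U \<and>
       (\<forall>v. Ck_on k (\<lambda>p. frechet_derivative g (at p) v) U))"

definition smooth_on :: "('a::euclidean_space \<Rightarrow> 'b::real_normed_vector) \<Rightarrow> 'a set \<Rightarrow> bool" where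
  "smooth_on g U \<longleftrightarrow> (\<forall>k. Ck_on k g U)"

definition sprod :: "spinor \<Rightarrow> spinor \<Rightarrow> complex" where
  "sprod u v = fst u * cnj (fst v) + snd u * cnj (snd v)"

definition cscale :: "complex \<Rightarrow> spinor \<Rightarrow> spinor" where
  "cscale c u = (c * fst u, c * snd u)"

(* Clifford multiplication by e1 and e2 *)
definition cl1 :: "spinor \<Rightarrow> spinor" where
  "cl1 u = (\<i> * fst u, - \<i> * snd u)"
definition cl2 :: "spinor \<Rightarrow> spinor" where
  "cl2 u = (snd u, - fst u)"

definition clv :: "real \<times> real \<Rightarrow> spinor \<Rightarrow> spinor" where
  "clv X u = fst X *\<^sub>R cl1 u + snd X *\<^sub>R cl2 u"

(* volume element omega = e1 . e2, and the projections onto the +-1 eigenspaces of i*omega *)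
definition volel :: "spinor \<Rightarrow> spinor" where
  "volel u = cl1 (cl2 u)"
definition splus :: "spinor \<Rightarrow> spinor" where
  "splus u = (1/2) *\<^sub>R (u + cscale \<i> (volel u))"
definition sminus :: "spinor \<Rightarrow> spinor" where
  "sminus u = (1/2) *\<^sub>R (u - cscale \<i> (volel u))"

definition lie :: "(pt \<Rightarrow> pt) \<Rightarrow> (pt \<Rightarrow> pt) \<Rightarrow> pt \<Rightarrow> pt" where
  "lie X Y p = frechet_derivative Y (at p) (X p) - frechet_derivative X (at p) (Y p)"

definition det2 :: "pt \<Rightarrow> pt \<Rightarrow> real" where
  "det2 v w = fst v * snd w - snd v * fst w"

definition fcoord1 :: "(pt \<Rightarrow> pt) \<Rightarrow> (pt \<Rightarrow> pt) \<Rightarrow> pt \<Rightarrow> pt \<Rightarrow> real" where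
  "fcoord1 e1 e2 p v = det2 v (e2 p) / det2 (e1 p) (e2 p)"
definition fcoord2 :: "(pt \<Rightarrow> pt) \<Rightarrow> (pt \<Rightarrow> pt) \<Rightarrow> pt \<Rightarrow> pt \<Rightarrow> real" where
  "fcoord2 e1 e2 p v = det2 (e1 p) v / det2 (e1 p) (e2 p)"

(* Levi-Civita connection form omega_12(X) = g(nabla_X e1, e2) of the orthonormal frame,
   via the Koszul formula: if [e1,e2] = alpha e1 + beta e2, then
   omega_12(e1) = -alpha and omega_12(e2) = -beta. *)
definition conn12 :: "(pt \<Rightarrow> pt) \<Rightarrow> (pt \<Rightarrow> pt) \<Rightarrow> pt \<Rightarrow> real \<times> real \<Rightarrow> real" where
  "conn12 e1 e2 p X =
     - fst X * fcoord1 e1 e2 p (lie e1 e2 p) - snd X * fcoord2 e1 e2 p (lie e1 e2 p)"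

(* spinor covariant derivative:
   nabla_X psi = X(psi) + 1/2 g(nabla_X e1, e2) e1 . e2 . psi *)
definition snabla :: "(pt \<Rightarrow> pt) \<Rightarrow> (pt \<Rightarrow> pt) \<Rightarrow> (pt \<Rightarrow> spinor) \<Rightarrow> pt \<Rightarrow> real \<times> real \<Rightarrow> spinor" where
  "snabla e1 e2 \<psi> p X =
     frechet_derivative \<psi> (at p) (fst X *\<^sub>R e1 p + snd X *\<^sub>R e2 p)
     + (conn12 e1 e2 p X / 2) *\<^sub>R volel (\<psi> p)"

definition dirac :: "(pt \<Rightarrow> pt) \<Rightarrow> (pt \<Rightarrow> pt) \<Rightarrow> (pt \<Rightarrow> spinor) \<Rightarrow> pt \<Rightarrow> spinor" where
  "dirac e1 e2 \<psi> p = cl1 (snabla e1 e2 \<psi> p (1,0)) + cl2 (snabla e1 e2 \<psi> p (0,1))"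

definition gX :: "real \<times> real \<Rightarrow> real \<times> real \<Rightarrow> real" where
  "gX X Y = fst X * fst Y + snd X * snd Y"

definition Qp :: "(pt \<Rightarrow> pt) \<Rightarrow> (pt \<Rightarrow> pt) \<Rightarrow> (pt \<Rightarrow> spinor) \<Rightarrow> pt \<Rightarrow> real \<times> real \<Rightarrow> real \<times> real \<Rightarrow> real" where
  "Qp e1 e2 \<phi> p X Y = Re (sprod (snabla e1 e2 (\<lambda>q. splus (\<phi> q)) p X) (clv Y (sminus (\<phi> p))))"
definition Qm :: "(pt \<Rightarrow> pt) \<Rightarrow> (pt \<Rightarrow> pt) \<Rightarrow> (pt \<Rightarrow> spinor) \<Rightarrow> pt \<Rightarrow> real \<times> real \<Rightarrow> real \<times> real \<Rightarrow> real" where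
  "Qm e1 e2 \<phi> p X Y = Re (sprod (snabla e1 e2 (\<lambda>q. sminus (\<phi> q)) p X) (clv Y (splus (\<phi> p))))"

definition Bpm :: "spinor \<Rightarrow> spinor \<Rightarrow> real \<times> real \<Rightarrow> real \<Rightarrow> real \<times> real \<Rightarrow> real \<times> real \<Rightarrow> real" where
  "Bpm u w T f X Y =
     - (1/2) * Re (sprod (clv X (clv T u)) (clv Y w))
     - (1/2) * gX X T * Re (sprod u (clv Y w))
     - (1/2) * f * Re (sprod (clv X w) (clv Y w))"

definition Ap :: "(pt \<Rightarrow> pt) \<Rightarrow> (pt \<Rightarrow> pt) \<Rightarrow> (pt \<Rightarrow> spinor) \<Rightarrow> (pt \<Rightarrow> real \<times> real) \<Rightarrow> (pt \<Rightarrow> real)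
     \<Rightarrow> pt \<Rightarrow> real \<times> real \<Rightarrow> real \<times> real \<Rightarrow> real" where
  "Ap e1 e2 \<phi> T f p X Y =
     Qp e1 e2 \<phi> p X Y + Bpm (splus (\<phi> p)) (sminus (\<phi> p)) (T p) (f p) X Y"
definition Am :: "(pt \<Rightarrow> pt) \<Rightarrow> (pt \<Rightarrow> pt) \<Rightarrow> (pt \<Rightarrow> spinor) \<Rightarrow> (pt \<Rightarrow> real \<times> real) \<Rightarrow> (pt \<Rightarrow> real)
     \<Rightarrow> pt \<Rightarrow> real \<times> real \<Rightarrow> real \<times> real \<Rightarrow> real" where
  "Am e1 e2 \<phi> T f p X Y =
     Qm e1 e2 \<phi> p X Y + Bpm (sminus (\<phi> p)) (splus (\<phi> p)) (T p) (f p) X Y"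

definition snorm2 :: "spinor \<Rightarrow> real" where
  "snorm2 u = Re (sprod u u)"

definition Wform :: "(pt \<Rightarrow> pt) \<Rightarrow> (pt \<Rightarrow> pt) \<Rightarrow> (pt \<Rightarrow> spinor) \<Rightarrow> (pt \<Rightarrow> real \<times> real) \<Rightarrow> (pt \<Rightarrow> real)
     \<Rightarrow> pt \<Rightarrow> real \<times> real \<Rightarrow> real \<times> real \<Rightarrow> real" where
  "Wform e1 e2 \<phi> T f p X Y =
     Ap e1 e2 \<phi> T f p X Y / snorm2 (sminus (\<phi> p)) - Am e1 e2 \<phi> T f p X Y / snorm2 (splus (\<phi> p))"

end

theory Submission
  imports Defs
begin

text \<open>Write \<open>\<phi>\<^sup>+ = (a, -a)\<close> and \<open>\<phi>\<^sup>- = (b, b)\<close>. In these chiral coordinates Clifford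
  multiplication by \<open>X = X\<^sub>1 e\<^sub>1 + X\<^sub>2 e\<^sub>2\<close> exchanges the half-spinors and acts, up to sign and
  conjugation, as multiplication by \<open>x = X\<^sub>2 + i X\<^sub>1\<close>; so \<open>A\<^sup>\<plusminus>\<close> become explicit expressions in
  \<open>a, b\<close> and the coordinates \<open>\<alpha>, \<beta>\<close> of \<open>\<nabla>\<^sub>X\<phi>\<^sup>\<plusminus>\<close>. The claim is \<open>|\<phi>\<^sup>+|\<^sup>2 A\<^sup>+ = |\<phi>\<^sup>-|\<^sup>2 A\<^sup>-\<close>;
  the \<open>f\<close>-terms of both sides agree, and the derivative enters only through
  \<open>\<gamma>(X) = \<alpha> conj a + b conj \<beta>\<close>, which has to cancel the \<open>T\<close>-terms. Now \<open>Re \<gamma>(X) = Re\<langle>\<nabla>\<^sub>X\<phi>, \<phi>\<rangle>/2\<close>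
  vanishes because \<open>|\<phi>|\<close> is constant, and the Dirac equation fixes \<open>\<gamma>(e\<^sub>2) - i \<gamma>(e\<^sub>1)\<close>;
  together they give \<open>\<gamma>(X) = -(i/2) (|a|\<^sup>2 + |b|\<^sup>2) Im (x conj t)\<close>, exactly what the
  cancellation needs.\<close>

definition chi_pos :: "spinor \<Rightarrow> complex" where
  "chi_pos u = (fst u - snd u) / 2"

definition chi_neg :: "spinor \<Rightarrow> complex" where
  "chi_neg u = (fst u + snd u) / 2"

definition vec_cpx :: "real \<times> real \<Rightarrow> complex" where
  "vec_cpx X = Complex (snd X) (fst X)"

lemma splus_chiral: "splus u = (chi_pos u, - chi_pos u)"
  by (simp add: splus_def chi_pos_def cscale_def volel_def cl1_def cl2_def
      prod_eq_iff scaleR_conv_of_real field_simps)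

lemma sminus_chiral: "sminus u = (chi_neg u, chi_neg u)"
  by (simp add: sminus_def chi_neg_def cscale_def volel_def cl1_def cl2_def
      prod_eq_iff scaleR_conv_of_real field_simps)

lemma chi_splus [simp]: "chi_pos (splus u) = chi_pos u" "chi_neg (splus u) = 0"
  by (simp_all add: splus_chiral chi_pos_def chi_neg_def)

lemma chi_sminus [simp]: "chi_pos (sminus u) = 0" "chi_neg (sminus u) = chi_neg u"
  by (simp_all add: sminus_chiral chi_pos_def chi_neg_def)

lemma chi_add [simp]:
  "chi_pos (u + v) = chi_pos u + chi_pos v" "chi_neg (u + v) = chi_neg u + chi_neg v"
  by (simp_all add: chi_pos_def chi_neg_def field_simps)

lemma chi_diff [simp]:
  "chi_pos (u - v) = chi_pos u - chi_pos v" "chi_neg (u - v) = chi_neg u - chi_neg v"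
  by (simp_all add: chi_pos_def chi_neg_def field_simps)

lemma chi_scaleR [simp]:
  "chi_pos (r *\<^sub>R u) = r *\<^sub>R chi_pos u" "chi_neg (r *\<^sub>R u) = r *\<^sub>R chi_neg u"
  by (simp_all add: chi_pos_def chi_neg_def scaleR_conv_of_real field_simps)

lemma chi_cl [simp]:
  "chi_pos (cl1 u) = \<i> * chi_neg u" "chi_neg (cl1 u) = \<i> * chi_pos u"
  "chi_pos (cl2 u) = chi_neg u" "chi_neg (cl2 u) = - chi_pos u"
  by (simp_all add: cl1_def cl2_def chi_pos_def chi_neg_def field_simps)

lemma chi_clv [simp]:
  "chi_pos (clv X u) = vec_cpx X * chi_neg u"
  "chi_neg (clv X u) = - cnj (vec_cpx X) * chi_pos u"
  by (simp_all add: clv_def vec_cpx_def complex_eq_iff)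

lemma sprod_chiral:
  "sprod u v = 2 * (chi_pos u * cnj (chi_pos v) + chi_neg u * cnj (chi_neg v))"
  by (simp add: sprod_def chi_pos_def chi_neg_def field_simps)

lemma snorm2_chiral: "snorm2 u = 2 * ((cmod (chi_pos u))\<^sup>2 + (cmod (chi_neg u))\<^sup>2)"
  unfolding cmod_power2 by (simp add: snorm2_def sprod_chiral power2_eq_square)

lemma gX_vec_cpx: "gX X Y = Re (vec_cpx X * cnj (vec_cpx Y))"
  by (simp add: gX_def vec_cpx_def)

lemma Ap_form_chiral:
  "Re (sprod (splus v) (clv Y (sminus u))) + Bpm (splus u) (sminus u) T f X Y
     = 2 * Re (chi_pos v * cnj (vec_cpx Y * chi_neg u))
       - Im (vec_cpx X * cnj (vec_cpx T)) * Im (chi_pos u * cnj (vec_cpx Y * chi_neg u))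
       - f * (cmod (chi_neg u))\<^sup>2 * Re (vec_cpx X * cnj (vec_cpx Y))"
  unfolding cmod_power2 by (simp add: Bpm_def sprod_chiral gX_vec_cpx algebra_simps power2_eq_square)

lemma Am_form_chiral:
  "Re (sprod (sminus v) (clv Y (splus u))) + Bpm (sminus u) (splus u) T f X Y
     = - 2 * Re (chi_neg v * cnj (chi_pos u) * vec_cpx Y)
       + Im (vec_cpx X * cnj (vec_cpx T)) * Im (chi_pos u * cnj (vec_cpx Y * chi_neg u))
       - f * (cmod (chi_pos u))\<^sup>2 * Re (vec_cpx X * cnj (vec_cpx Y))"
  unfolding cmod_power2 by (simp add: Bpm_def sprod_chiral gX_vec_cpx algebra_simps power2_eq_square)

lemma chiral_pairing_from_dirac:
  fixes n1 n2 u :: spinor and X :: "real \<times> real"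
  assumes dirac: "cl1 n1 + cl2 n2 = h *\<^sub>R u - (1/2) *\<^sub>R clv T u"
    and orth1: "Re (sprod n1 u) = 0" and orth2: "Re (sprod n2 u) = 0"
  defines "n \<equiv> fst X *\<^sub>R n1 + snd X *\<^sub>R n2"
  shows "chi_pos n * cnj (chi_pos u) + cnj (chi_neg n) * chi_neg u
           = - \<i> * Im (vec_cpx X * cnj (vec_cpx T))
               * ((cmod (chi_pos u))\<^sup>2 + (cmod (chi_neg u))\<^sup>2) / 2"
proof -
  define a b t where "a = chi_pos u" and "b = chi_neg u" and "t = vec_cpx T"
  define \<gamma> where "\<gamma> v = chi_pos v * cnj a + cnj (chi_neg v) * b" for v
  define N where "N = (cmod a)\<^sup>2 + (cmod b)\<^sup>2"
  have N: "N = Re (a * cnj a + b * cnj b)"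
    unfolding N_def cmod_power2 by (simp add: power2_eq_square)
  have pos: "\<i> * chi_neg n1 + chi_neg n2 = h * a - t * b / 2"
    using arg_cong[OF dirac, of chi_pos] by (simp add: a_def b_def t_def scaleR_conv_of_real)
  have neg: "\<i> * chi_pos n1 - chi_pos n2 = h * b + cnj t * a / 2"
    using arg_cong[OF dirac, of chi_neg] by (simp add: a_def b_def t_def scaleR_conv_of_real)
  have "\<gamma> n2 - \<i> * \<gamma> n1 = (chi_pos n2 - \<i> * chi_pos n1) * cnj a + cnj (\<i> * chi_neg n1 + chi_neg n2) * b"
    by (simp add: \<gamma>_def algebra_simps)
  also have "\<dots> = - cnj t * (a * cnj a + b * cnj b) / 2"
  proof -
    have n2: "chi_pos n2 = \<i> * chi_pos n1 - h * b - cnj t * a / 2"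
      using neg by (simp add: algebra_simps)
    show ?thesis
      unfolding n2 pos by (simp add: algebra_simps)
  qed
  finally have rel: "\<gamma> n2 - \<i> * \<gamma> n1 = - cnj t * (a * cnj a + b * cnj b) / 2" .
  have re_\<gamma>: "Re (\<gamma> v) = Re (sprod v u) / 2" for v
    by (simp add: \<gamma>_def sprod_chiral a_def b_def)
  have re: "Re (\<gamma> n1) = 0" "Re (\<gamma> n2) = 0"
    using orth1 orth2 by (simp_all only: re_\<gamma>)
  have \<gamma>1: "\<gamma> n1 = - \<i> * Re t * N / 2" and \<gamma>2: "\<gamma> n2 = \<i> * Im t * N / 2"
    using rel re unfolding N by (simp_all add: complex_eq_iff field_simps)
  have "\<gamma> n = of_real (fst X) * \<gamma> n1 + of_real (snd X) * \<gamma> n2"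
    by (simp add: \<gamma>_def n_def scaleR_conv_of_real algebra_simps)
  also have "\<dots> = - \<i> * Im (vec_cpx X * cnj t) * N / 2"
    unfolding \<gamma>1 \<gamma>2 by (simp add: complex_eq_iff vec_cpx_def algebra_simps)
  finally show ?thesis
    by (simp add: \<gamma>_def a_def b_def t_def N_def)
qed

lemma balance_from_pairing:
  fixes \<alpha> \<beta> a b s y :: complex
  assumes "\<alpha> * cnj a + cnj \<beta> * b = - \<i> * Im s * ((cmod a)\<^sup>2 + (cmod b)\<^sup>2) / 2"
  shows "(cmod a)\<^sup>2 * (2 * Re (\<alpha> * cnj (y * b)) - Im s * Im (a * cnj (y * b)))
       = (cmod b)\<^sup>2 * (- 2 * Re (\<beta> * cnj a * y) + Im s * Im (a * cnj (y * b)))"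
proof -
  define w where "w = a * cnj (y * b)"
  have "(cmod a)\<^sup>2 * Re (\<alpha> * cnj (y * b)) + (cmod b)\<^sup>2 * Re (\<beta> * cnj a * y)
          = Re (of_real ((cmod a)\<^sup>2) * (\<alpha> * cnj (y * b)) + of_real ((cmod b)\<^sup>2) * cnj (\<beta> * cnj a * y))"
    by (simp add: algebra_simps)
  also have "\<dots> = Re ((\<alpha> * cnj a + cnj \<beta> * b) * w)"
    unfolding complex_norm_square w_def by (simp add: algebra_simps)
  also have "\<dots> = Im s * ((cmod a)\<^sup>2 + (cmod b)\<^sup>2) * Im w / 2"
    by (simp add: assms)
  finally show ?thesis
    by (simp add: w_def algebra_simps)
qed

lemma pointwise_W_identity:
  fixes n1 n2 u :: spinor and X :: "real \<times> real"
  assumes dirac: "cl1 n1 + cl2 n2 = h *\<^sub>R u - (1/2) *\<^sub>R clv T u"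
    and orth1: "Re (sprod n1 u) = 0" and orth2: "Re (sprod n2 u) = 0"
    and pos: "splus u \<noteq> 0" and neg: "sminus u \<noteq> 0"
  defines "n \<equiv> fst X *\<^sub>R n1 + snd X *\<^sub>R n2"
  shows "(Re (sprod (splus n) (clv Y (sminus u))) + Bpm (splus u) (sminus u) T f X Y) / snorm2 (sminus u)
       = (Re (sprod (sminus n) (clv Y (splus u))) + Bpm (sminus u) (splus u) T f X Y) / snorm2 (splus u)"
proof -
  have key: "(P - f * B * R) / (2 * B) = (M - f * A * R) / (2 * A)"
    if "A * P = B * M" and "A > 0" and "B > 0" for A B P M R :: real
    using that by (simp add: field_simps)
  have "chi_pos u \<noteq> 0" "chi_neg u \<noteq> 0"
    using pos neg by (simp_all add: splus_chiral sminus_chiral zero_prod_def)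
  moreover have norms: "snorm2 (splus u) = 2 * (cmod (chi_pos u))\<^sup>2"
    "snorm2 (sminus u) = 2 * (cmod (chi_neg u))\<^sup>2"
    by (simp_all add: snorm2_chiral)
  moreover note balance_from_pairing[OF chiral_pairing_from_dirac[OF dirac orth1 orth2,
        where X = X, folded n_def]]
  ultimately show ?thesis
    unfolding Ap_form_chiral Am_form_chiral norms by (intro key) simp_all
qed

lemma smooth_on_imp_differentiable_at:
  assumes "smooth_on g U" and "open U" and "p \<in> U"
  shows "g differentiable (at p)"
proof -
  have "g differentiable_on U"
    using assms(1) unfolding smooth_on_def by (metis Ck_on.simps(2))
  then show ?thesis
    using assms(2,3) by (simp add: differentiable_on_eq_differentiable_at)
qed

lemma bounded_linear_splus: "bounded_linear splus"
  unfolding linear_conv_bounded_linear[symmetric]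
  by (rule linearI) (simp_all add: splus_chiral scaleR_conv_of_real)

lemma bounded_linear_sminus: "bounded_linear sminus"
  unfolding linear_conv_bounded_linear[symmetric]
  by (rule linearI) (simp_all add: sminus_chiral scaleR_conv_of_real)

lemma splus_volel: "splus (volel u) = volel (splus u)"
  and sminus_volel: "sminus (volel u) = volel (sminus u)"
  by (simp_all add: splus_chiral sminus_chiral volel_def cl1_def cl2_def chi_pos_def chi_neg_def
      field_simps)

lemma Re_sprod_eq_inner: "Re (sprod u v) = inner u v"
  by (simp add: sprod_def inner_prod_def inner_complex_def)

lemma Re_sprod_volel_self: "Re (sprod (volel u) u) = 0"
  by (simp add: sprod_def volel_def cl1_def cl2_def)

lemma snabla_comp_linear:
  assumes g: "bounded_linear g" and g_volel: "\<And>u. g (volel u) = volel (g u)"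
    and "\<phi> differentiable (at p)"
  shows "snabla e1 e2 (\<lambda>q. g (\<phi> q)) p X = g (snabla e1 e2 \<phi> p X)"
proof -
  have "((\<lambda>q. g (\<phi> q)) has_derivative (\<lambda>v. g (frechet_derivative \<phi> (at p) v))) (at p)"
    using bounded_linear.has_derivative[OF g] assms(3) frechet_derivative_works by blast
  then have "frechet_derivative (\<lambda>q. g (\<phi> q)) (at p) = (\<lambda>v. g (frechet_derivative \<phi> (at p) v))"
    by (rule frechet_derivative_at[symmetric])
  then show ?thesis
    by (simp add: snabla_def g_volel linear_add[OF bounded_linear.linear[OF g]]
        linear_scale[OF bounded_linear.linear[OF g]])
qed

lemma snabla_frame_expansion:
  assumes "\<phi> differentiable (at p)"
  shows "snabla e1 e2 \<phi> p X = fst X *\<^sub>R snabla e1 e2 \<phi> p (1, 0) + snd X *\<^sub>R snabla e1 e2 \<phi> p (0, 1)"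
proof -
  have "linear (frechet_derivative \<phi> (at p))"
    using assms frechet_derivative_works has_derivative_linear by blast
  moreover have "conn12 e1 e2 p X = fst X * conn12 e1 e2 p (1, 0) + snd X * conn12 e1 e2 p (0, 1)"
    by (simp add: conn12_def)
  ultimately show ?thesis
    by (simp add: snabla_def linear_add linear_scale scaleR_add_right add_divide_distrib
        scaleR_add_left algebra_simps)
qed

lemma snabla_orthogonal_const_norm:
  assumes "open U" and "p \<in> U" and "\<phi> differentiable (at p)" and "\<forall>q\<in>U. snorm2 (\<phi> q) = c"
  shows "Re (sprod (snabla e1 e2 \<phi> p X) (\<phi> p)) = 0"
proof -
  define L where "L = frechet_derivative \<phi> (at p)"
  have D: "(\<phi> has_derivative L) (at p)"
    using assms(3) frechet_derivative_works L_def by blast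
  have "((\<lambda>q. inner (\<phi> q) (\<phi> q)) has_derivative (\<lambda>v. inner (\<phi> p) (L v) + inner (L v) (\<phi> p))) (at p)"
    by (rule has_derivative_inner[OF D D])
  moreover have "((\<lambda>q. inner (\<phi> q) (\<phi> q)) has_derivative (\<lambda>v. 0)) (at p)"
    by (rule has_derivative_transform_within_open[OF has_derivative_const assms(1,2)])
      (use assms(4) in \<open>simp add: snorm2_def Re_sprod_eq_inner\<close>)
  ultimately have "inner (\<phi> p) (L v) + inner (L v) (\<phi> p) = 0" for v
    by (metis has_derivative_unique)
  then have "inner (L v) (\<phi> p) = 0" for v
    by (simp add: inner_commute)
  moreover have "inner (volel (\<phi> p)) (\<phi> p) = 0"
    using Re_sprod_volel_self by (simp add: Re_sprod_eq_inner)
  ultimately show ?thesis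
    by (simp add: snabla_def L_def[symmetric] Re_sprod_eq_inner inner_add_left)
qed

theorem mainTheorem13:
  fixes U :: "pt set" and e1 e2 :: "pt \<Rightarrow> pt"
    and \<phi> :: "pt \<Rightarrow> spinor" and T :: "pt \<Rightarrow> real \<times> real" and f H :: "pt \<Rightarrow> real"
  assumes "open U"
    and "smooth_on e1 U" and "smooth_on e2 U"
    and "\<forall>p\<in>U. det2 (e1 p) (e2 p) \<noteq> 0"
    and "smooth_on \<phi> U" and "smooth_on T U" and "smooth_on f U" and "smooth_on H U"
    and "\<exists>c. \<forall>p\<in>U. snorm2 (\<phi> p) = c"
    and "\<forall>p\<in>U. dirac e1 e2 \<phi> p
            = (H p - f p) *\<^sub>R \<phi> p - (1/2) *\<^sub>R clv (T p) (\<phi> p)"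
    and "\<forall>p\<in>U. splus (\<phi> p) \<noteq> 0" and "\<forall>p\<in>U. sminus (\<phi> p) \<noteq> 0"
  shows "\<forall>p\<in>U. \<forall>X Y. Wform e1 e2 \<phi> T f p X Y = 0"
proof (intro ballI allI)
  fix p X Y
  assume p: "p \<in> U"
  have d\<phi>: "\<phi> differentiable (at p)"
    using smooth_on_imp_differentiable_at[OF assms(5,1) p] .
  define n1 n2 where "n1 = snabla e1 e2 \<phi> p (1, 0)" and "n2 = snabla e1 e2 \<phi> p (0, 1)"
  obtain c where "\<forall>q\<in>U. snorm2 (\<phi> q) = c"
    using assms(9) by blast
  then have orth1: "Re (sprod n1 (\<phi> p)) = 0" and orth2: "Re (sprod n2 (\<phi> p)) = 0"
    unfolding n1_def n2_def using snabla_orthogonal_const_norm[OF assms(1) p d\<phi>] by blast+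
  have dirac: "cl1 n1 + cl2 n2 = (H p - f p) *\<^sub>R \<phi> p - (1/2) *\<^sub>R clv (T p) (\<phi> p)"
    using assms(10) p by (simp add: n1_def n2_def dirac_def)
  have nX: "snabla e1 e2 \<phi> p X = fst X *\<^sub>R n1 + snd X *\<^sub>R n2"
    unfolding n1_def n2_def by (rule snabla_frame_expansion[OF d\<phi>])
  have "splus (\<phi> p) \<noteq> 0" and "sminus (\<phi> p) \<noteq> 0"
    using assms(11,12) p by blast+
  note balance = pointwise_W_identity[OF dirac orth1 orth2 this, where X = X and Y = Y and f = "f p"]
  have "snabla e1 e2 (\<lambda>q. splus (\<phi> q)) p X = splus (fst X *\<^sub>R n1 + snd X *\<^sub>R n2)"
    and "snabla e1 e2 (\<lambda>q. sminus (\<phi> q)) p X = sminus (fst X *\<^sub>R n1 + snd X *\<^sub>R n2)"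
    unfolding nX[symmetric]
    by (simp_all add: d\<phi> snabla_comp_linear[OF bounded_linear_splus splus_volel]
        snabla_comp_linear[OF bounded_linear_sminus sminus_volel])
  then show "Wform e1 e2 \<phi> T f p X Y = 0"
    using balance by (simp add: Wform_def Ap_def Am_def Qp_def Qm_def)
qed

end
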